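(* For every group $G$, $S(G) = \bigcap_{N \lhd G,\ |G:N|<\infty} F_N(G)$.
   Context: $S(G) := \{ x \in G : x^{|G:H|} \in H \text{ for every subgroup } H \leqslant G \text{ of finite index}\}$. For a group $X$, the Fitting subgroup $F(X)$ is the subgroup generated by all nilpotent normal subgroups of $X$. For $N \lhd G$, $F_N(G)$ denotes the preimage of $F(G/N)$ under the projection $G \to G/N$. *)

theory Defs
  imports "HOL-Algebra.Algebra"
begin

definition comm_subgroup :: "('a, 'b) monoid_scheme \<Rightarrow> 'a set \<Rightarrow> 'a set \<Rightarrow> 'a set" where
  "comm_subgroup G A B = generate G
     {a \<otimes>\<^bsub>G\<^esub> b \<otimes>\<^bsub>G\<^esub> inv\<^bsub>G\<^esub> a \<otimes>\<^bsub>G\<^esub> inv\<^bsub>G\<^esub> b | a b. a \<in> A \<and> b \<in> B}"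

text \<open>Lower central series: gamma_1 = G (index 0), gamma_(i+1) = [gamma_i, G].\<close>
fun lower_central :: "('a, 'b) monoid_scheme \<Rightarrow> nat \<Rightarrow> 'a set" where
  "lower_central G 0 = carrier G"
| "lower_central G (Suc n) = comm_subgroup G (lower_central G n) (carrier G)"

definition nilpotent_group :: "('a, 'b) monoid_scheme \<Rightarrow> bool" where
  "nilpotent_group G \<longleftrightarrow> group G \<and> (\<exists>n. lower_central G n = {\<one>\<^bsub>G\<^esub>})"

definition fitting :: "('a, 'b) monoid_scheme \<Rightarrow> 'a set" where
  "fitting Y = generate Y (\<Union>{K. normal K Y \<and> nilpotent_group (Y\<lparr>carrier := K\<rparr>)})"

definition fitting_rel :: "('a, 'b) monoid_scheme \<Rightarrow> 'a set \<Rightarrow> 'a set" where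
  "fitting_rel G N = {x \<in> carrier G. N #>\<^bsub>G\<^esub> x \<in> fitting (G Mod N)}"

text \<open>S(G).  A subgroup H has finite index iff rcosets H is finite; the index is its card.\<close>
definition S_set :: "('a, 'b) monoid_scheme \<Rightarrow> 'a set" where
  "S_set G = {x \<in> carrier G. \<forall>H. subgroup H G \<and> finite (rcosets\<^bsub>G\<^esub> H)
        \<longrightarrow> x [^]\<^bsub>G\<^esub> card (rcosets\<^bsub>G\<^esub> H) \<in> H}"

end

theory Submission
  imports Defs "HOL-Algebra.Multiplicative_Group" "HOL-Algebra.SndIsomorphismGrp"
begin

text \<open>For finite \<open>G\<close> one shows \<open>S(G) = F(G)\<close>. If \<open>K\<close> is a nilpotent normal subgroup
  and \<open>H \<le> G\<close>, every \<open>x \<in> K\<close> raised to the power \<open>|K : K \<inter> H|\<close> lies in \<open>K \<inter> H\<close> (climb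
  from \<open>K \<inter> H\<close> to \<open>K\<close> through normalizers, which grow in nilpotent groups), and
  \<open>|K : K \<inter> H|\<close> divides \<open>|G : H|\<close>. Since \<open>F(G)\<close> lies in the product of the cores \<open>O\<^sub>p(G)\<close>,
  whose factors commute elementwise, \<open>F(G) \<subseteq> S(G)\<close>. Conversely, an element of \<open>S(G)\<close> of
  \<open>p\<close>-power order lies in every Sylow \<open>p\<close>-subgroup, whose index is prime to \<open>p\<close>; so it lies in
  the normal \<open>p\<close>-subgroup \<open>O\<^sub>p(G)\<close>, which is nilpotent. Every element is a product of powers
  of prime power order.

  For arbitrary \<open>G\<close>, the subgroups of finite index containing a normal subgroup \<open>N\<close>
  correspond to the subgroups of \<open>G/N\<close> with the same index, and every subgroup of finite index
  contains one that is normal, its core. Hence \<open>x \<in> S(G)\<close> iff \<open>xN \<in> S(G/N) = F(G/N)\<close> for every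
  normal subgroup \<open>N\<close> of finite index.\<close>

context group begin

lemma inv_mult_cancel_left [simp]: "x \<in> carrier G \<Longrightarrow> y \<in> carrier G \<Longrightarrow> inv x \<otimes> (x \<otimes> y) = y"
  by (simp flip: m_assoc)

lemma mult_inv_cancel_left [simp]: "x \<in> carrier G \<Longrightarrow> y \<in> carrier G \<Longrightarrow> x \<otimes> (inv x \<otimes> y) = y"
  by (simp flip: m_assoc)

lemma subgroup_nat_pow_closed:
  assumes "subgroup H G" "x \<in> H"
  shows "x [^] (n::nat) \<in> H"
  using subgroup_int_pow_closed[OF assms, of "int n"] by (simp add: int_pow_int)

lemma rcos_eq_iff:
  assumes "subgroup H G" "a \<in> carrier G" "b \<in> carrier G"
  shows "H #> a = H #> b \<longleftrightarrow> a \<otimes> inv b \<in> H"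
  by (metis assms is_group rcos_self repr_independence subgroup.rcos_module)

lemma lagrange_in_subgroup:
  assumes "subgroup M G" "subgroup L G" "L \<subseteq> M"
  shows "card (rcosets\<^bsub>G\<lparr>carrier := M\<rparr>\<^esub> L) * card L = card M"
  using group.lagrange[OF subgroup_imp_group[OF assms(1)] subgroup_incl[OF assms(2,1,3)]]
  by (simp add: order_def)

lemma card_subgroup_pos:
  assumes "subgroup H G" "finite H"
  shows "card H > 0"
  using subgroup.one_closed[OF assms(1)] assms(2) card_gt_0_iff by blast

lemma card_subgroup_dvd:
  assumes "subgroup M G" "subgroup L G" "L \<subseteq> M"
  shows "card L dvd card M"
  using lagrange_in_subgroup[OF assms] by (metis dvd_triv_right)

lemma card_rcosets_eq_div:
  assumes "finite (carrier G)" "subgroup H G"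
  shows "card (rcosets H) = order G div card H"
proof -
  have "card H > 0"
    using card_subgroup_pos[OF assms(2)] assms subgroup.subset finite_subset by metis
  then show ?thesis using lagrange[OF assms(2)] by (metis div_mult_self_is_m)
qed

lemma mem_subgroup_if_coprime_pows:
  assumes W: "subgroup W G" and z: "z \<in> carrier G" and "m \<noteq> 0" "coprime m (n::nat)"
    and "z [^] m \<in> W" "z [^] n \<in> W"
  shows "z \<in> W"
proof -
  obtain a b where "m * a = n * b + 1" using bezout_nat[of m n] assms(3,4) by auto
  then have "z [^] (m * a) = z [^] (n * b) \<otimes> z" using z by (simp add: nat_pow_mult)
  then have "z = inv ((z [^] n) [^] b) \<otimes> (z [^] m) [^] a" using z by (simp add: nat_pow_pow)
  then show ?thesis
    using assms(5,6) subgroup_nat_pow_closed[OF W] subgroup.m_closed[OF W] subgroup.m_inv_closed[OF W]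
    by metis
qed

text \<open>Split \<open>ord z = a b\<close> with \<open>a\<close> the full power of a prime \<open>p\<close> dividing it: \<open>z\<^sup>a\<close> and \<open>z\<^sup>b\<close>
  have smaller order, and \<open>z\<close> is recovered from them since \<open>a\<close> and \<open>b\<close> are coprime.\<close>

lemma mem_subgroup_if_prime_power_order_pows_mem:
  assumes fin: "finite (carrier G)" and W: "subgroup W G"
  shows "z \<in> carrier G \<Longrightarrow>
    (\<And>k p j. Factorial_Ring.prime (p::nat) \<Longrightarrow> ord (z [^] (k::nat)) = p ^ j \<Longrightarrow> z [^] k \<in> W)
    \<Longrightarrow> z \<in> W"
proof (induction "ord z" arbitrary: z rule: less_induct)
  case less
  note z = less.prems(1)
  have o1: "ord z \<ge> 1" using ord_ge_1[OF fin z] .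
  show ?case
  proof (cases "ord z = 1")
    case True
    then show ?thesis using ord_eq_1[OF z] subgroup.one_closed[OF W] by simp
  next
    case False
    then obtain p where p: "Factorial_Ring.prime p" "p dvd ord z"
      using prime_factor_nat by blast
    define a where "a = p ^ multiplicity p (ord z)"
    obtain b where ab: "ord z = a * b" and "\<not> p dvd b"
      using multiplicity_decompose'[of "ord z" p] o1 prime_gt_1_nat[OF p(1)] unfolding a_def by auto
    have "multiplicity p (ord z) \<noteq> 0"
      using prime_elem_multiplicity_eq_zero_iff[OF prime_imp_prime_elem[OF p(1)]] o1 p(2) by simp
    then have "a \<noteq> 1"
      using prime_gt_1_nat[OF p(1)] unfolding a_def by simp
    have cop: "coprime a b"
      using prime_imp_coprime[OF p(1) \<open>\<not> p dvd b\<close>] unfolding a_def by simp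
    show ?thesis
    proof (cases "b = 1")
      case True
      then show ?thesis using less.prems(2)[OF p(1), of 1] ab z unfolding a_def by simp
    next
      case False
      have ab0: "a \<noteq> 0" "b \<noteq> 0" using ab o1 by auto
      have "ord (z [^] a) = b" "ord (z [^] b) = a"
        using ord_pow[OF z, of a] ord_pow[OF z, of b] ab ab0 by simp_all
      then have smaller: "ord (z [^] a) < ord z" "ord (z [^] b) < ord z"
        using ab ab0 False \<open>a \<noteq> 1\<close> by (simp_all add: nat_neq_iff)
      have "z [^] c \<in> W" if "c \<in> {a, b}" for c
      proof (rule less.hyps)
        show "ord (z [^] c) < ord z" using that smaller by auto
        fix k q j assume "Factorial_Ring.prime (q::nat)" "ord ((z [^] c) [^] (k::nat)) = q ^ j"
        then show "(z [^] c) [^] k \<in> W" using less.prems(2)[of q "c * k" j] z by (simp add: nat_pow_pow)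
      qed (use z in simp)
      then show ?thesis using mem_subgroup_if_coprime_pows[OF W z ab0(1) cop] by simp
    qed
  qed
qed

end

fun lower_central_in :: "('a, 'b) monoid_scheme \<Rightarrow> 'a set \<Rightarrow> nat \<Rightarrow> 'a set" where
  "lower_central_in G K 0 = K"
| "lower_central_in G K (Suc n) = comm_subgroup G (lower_central_in G K n) K"

context group begin

lemma subgroup_comm_subgroup:
  assumes "A \<subseteq> carrier G" "B \<subseteq> carrier G"
  shows "subgroup (comm_subgroup G A B) G"
  unfolding comm_subgroup_def using assms by (intro generate_is_subgroup) blast

lemma commutator_mem_comm_subgroup:
  assumes "a \<in> A" "b \<in> B"
  shows "a \<otimes> b \<otimes> inv a \<otimes> inv b \<in> comm_subgroup G A B"
  unfolding comm_subgroup_def using assms by (blast intro: generate.incl)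

lemma comm_subgroup_subset:
  assumes Z: "subgroup Z G"
    and comm: "\<And>a b. a \<in> A \<Longrightarrow> b \<in> B \<Longrightarrow> a \<otimes> b \<otimes> inv a \<otimes> inv b \<in> Z"
  shows "comm_subgroup G A B \<subseteq> Z"
  unfolding comm_subgroup_def by (rule generate_subgroup_incl[OF _ Z]) (use comm in blast)

lemma subgroup_lower_central_in:
  assumes K: "subgroup K G"
  shows "subgroup (lower_central_in G K n) G \<and> lower_central_in G K n \<subseteq> K"
proof (induction n)
  case (Suc n)
  have "lower_central_in G K n \<subseteq> carrier G" "K \<subseteq> carrier G"
    using Suc subgroup.subset[OF K] by auto
  moreover have "comm_subgroup G (lower_central_in G K n) K \<subseteq> K"
    using Suc by (intro comm_subgroup_subset[OF K]) (auto intro!: subgroup.m_closed[OF K] subgroup.m_inv_closed[OF K])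
  ultimately show ?case
    using subgroup_comm_subgroup by simp
qed (use K in simp)

lemma lower_central_subgroup_eq:
  assumes K: "subgroup K G"
  shows "lower_central (G\<lparr>carrier := K\<rparr>) n = lower_central_in G K n"
proof (induction n)
  case (Suc n)
  have L: "lower_central_in G K n \<subseteq> K"
    using subgroup_lower_central_in[OF K] by blast
  have comms: "{a \<otimes> b \<otimes> inv a \<otimes> inv b | a b. a \<in> lower_central_in G K n \<and> b \<in> K} \<subseteq> K"
    using subgroup_lower_central_in[OF K, of n] K
    by (auto intro!: subgroup.m_closed subgroup.m_inv_closed)
  have "{a \<otimes>\<^bsub>G\<lparr>carrier := K\<rparr>\<^esub> b \<otimes>\<^bsub>G\<lparr>carrier := K\<rparr>\<^esub> inv\<^bsub>G\<lparr>carrier := K\<rparr>\<^esub> a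
          \<otimes>\<^bsub>G\<lparr>carrier := K\<rparr>\<^esub> inv\<^bsub>G\<lparr>carrier := K\<rparr>\<^esub> b | a b.
          a \<in> lower_central_in G K n \<and> b \<in> carrier (G\<lparr>carrier := K\<rparr>)}
      = {a \<otimes> b \<otimes> inv a \<otimes> inv b | a b. a \<in> lower_central_in G K n \<and> b \<in> K}"
    using L K by force
  then show ?case
    using generate_consistent[OF comms K] by (simp add: comm_subgroup_def Suc)
qed simp

lemma nilpotent_group_subgroup_iff:
  assumes "subgroup K G"
  shows "nilpotent_group (G\<lparr>carrier := K\<rparr>) \<longleftrightarrow> (\<exists>n. lower_central_in G K n = {\<one>})"
  using subgroup_imp_group[OF assms] lower_central_subgroup_eq[OF assms]
  by (simp add: nilpotent_group_def)

end

section \<open>Powers in nilpotent subgroups\<close>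

context group begin

definition normal_in :: "'a set \<Rightarrow> 'a set \<Rightarrow> bool" where
  "normal_in L M \<longleftrightarrow> subgroup L G \<and> L \<subseteq> M \<and> (\<forall>g\<in>M. \<forall>h\<in>L. g \<otimes> h \<otimes> inv g \<in> L)"

lemma normal_in_imp_normal:
  assumes M: "subgroup M G" and L: "normal_in L M"
  shows "L \<lhd> G\<lparr>carrier := M\<rparr>"
proof -
  interpret GM: group "G\<lparr>carrier := M\<rparr>" using subgroup_imp_group[OF M] .
  show ?thesis
  proof (rule GM.normal_invI)
    show "subgroup L (G\<lparr>carrier := M\<rparr>)"
      using L subgroup_incl[OF _ M] unfolding normal_in_def by blast
    fix x h assume "x \<in> carrier (G\<lparr>carrier := M\<rparr>)" "h \<in> L"
    then show "x \<otimes>\<^bsub>G\<lparr>carrier := M\<rparr>\<^esub> h \<otimes>\<^bsub>G\<lparr>carrier := M\<rparr>\<^esub> inv\<^bsub>G\<lparr>carrier := M\<rparr>\<^esub> x \<in> L"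
      using L M unfolding normal_in_def by (simp add: m_inv_consistent)
  qed
qed

lemma normal_in_conj_rcos:
  assumes Z: "normal_in Z P" and P: "subgroup P G" and g: "g \<in> P" and x: "x \<in> P"
  shows "g <# (Z #> x) #> inv g = Z #> (g \<otimes> x \<otimes> inv g)"
proof -
  have Z_sub: "Z \<subseteq> carrier G" and conj: "\<And>g z. g \<in> P \<Longrightarrow> z \<in> Z \<Longrightarrow> g \<otimes> z \<otimes> inv g \<in> Z"
    using Z subgroup.subset[OF P] by (auto simp: normal_in_def)
  have gx: "g \<in> carrier G" "x \<in> carrier G" using g x subgroup.mem_carrier[OF P] by auto
  have "g \<otimes> (z \<otimes> x) \<otimes> inv g = (g \<otimes> z \<otimes> inv g) \<otimes> (g \<otimes> x \<otimes> inv g)" if "z \<in> Z" for z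
    using that Z_sub gx by (auto simp: m_assoc)
  moreover have "z \<otimes> (g \<otimes> x \<otimes> inv g) = g \<otimes> ((inv g \<otimes> z \<otimes> inv (inv g)) \<otimes> x) \<otimes> inv g"
    if "z \<in> Z" for z
    using that Z_sub gx by (auto simp: m_assoc)
  moreover have "inv g \<in> P" using subgroup.m_inv_closed[OF P g] .
  ultimately show ?thesis
    using conj[OF g] conj[of "inv g"] unfolding l_coset_def r_coset_def by fastforce
qed

lemma pow_quotient_order_mem:
  assumes M: "subgroup M G" and finM: "finite M" and L: "normal_in L M" and z: "z \<in> M"
  shows "z [^] (card M div card L) \<in> L"
proof -
  interpret GM: group "G\<lparr>carrier := M\<rparr>" using subgroup_imp_group[OF M] .
  interpret LM: normal L "G\<lparr>carrier := M\<rparr>" using normal_in_imp_normal[OF M L] .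
  interpret Q: group "G\<lparr>carrier := M\<rparr> Mod L" using LM.factorgroup_is_group .
  have "card (rcosets\<^bsub>G\<lparr>carrier := M\<rparr>\<^esub> L) * card L = card M"
    using lagrange_in_subgroup[OF M] L by (simp add: normal_in_def)
  moreover have "card L > 0"
    using L finM card_subgroup_pos finite_subset unfolding normal_in_def by blast
  ultimately have ordQ: "order (G\<lparr>carrier := M\<rparr> Mod L) = card M div card L"
    by (simp add: order_def FactGroup_def) (metis div_mult_self_is_m)
  have "L #>\<^bsub>G\<lparr>carrier := M\<rparr>\<^esub> z \<in> carrier (G\<lparr>carrier := M\<rparr> Mod L)"
    using z by (auto simp: FactGroup_def RCOSETS_def)
  then have "(L #>\<^bsub>G\<lparr>carrier := M\<rparr>\<^esub> z) [^]\<^bsub>G\<lparr>carrier := M\<rparr> Mod L\<^esub> (card M div card L)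
      = \<one>\<^bsub>G\<lparr>carrier := M\<rparr> Mod L\<^esub>"
    using Q.pow_order_eq_1 ordQ by simp
  then have "L #>\<^bsub>G\<lparr>carrier := M\<rparr>\<^esub> (z [^]\<^bsub>G\<lparr>carrier := M\<rparr>\<^esub> (card M div card L)) = L"
    using LM.FactGroup_pow[of z] z by simp
  then have "L #> (z [^] (card M div card L)) = L"
    by (simp flip: nat_pow_consistent)
  moreover have "z [^] (card M div card L) \<in> L #> (z [^] (card M div card L))"
    using z subgroup.subset[OF M] L rcos_self unfolding normal_in_def by blast
  ultimately show ?thesis by simp
qed

definition normalizer_in :: "'a set \<Rightarrow> 'a set \<Rightarrow> 'a set" where
  "normalizer_in M L = {g \<in> M. \<forall>h\<in>L. g \<otimes> h \<otimes> inv g \<in> L \<and> inv g \<otimes> h \<otimes> g \<in> L}"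

lemma normalizer_in_subgroup:
  assumes M: "subgroup M G" and L: "L \<subseteq> carrier G"
  shows "subgroup (normalizer_in M L) G"
proof (rule subgroupI)
  show "normalizer_in M L \<subseteq> carrier G"
    using subgroup.subset[OF M] by (auto simp: normalizer_in_def)
  have "\<one> \<in> normalizer_in M L"
    using subgroup.one_closed[OF M] L by (auto simp: normalizer_in_def)
  then show "normalizer_in M L \<noteq> {}" by blast
next
  fix a assume "a \<in> normalizer_in M L"
  then show "inv a \<in> normalizer_in M L"
    using subgroup.m_inv_closed[OF M] subgroup.mem_carrier[OF M]
    by (auto simp: normalizer_in_def)
next
  fix a b assume a: "a \<in> normalizer_in M L" and b: "b \<in> normalizer_in M L"
  then have ab: "a \<in> carrier G" "b \<in> carrier G"
    using subgroup.mem_carrier[OF M] by (auto simp: normalizer_in_def)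
  have "a \<otimes> b \<otimes> h \<otimes> inv (a \<otimes> b) = a \<otimes> (b \<otimes> h \<otimes> inv b) \<otimes> inv a"
    "inv (a \<otimes> b) \<otimes> h \<otimes> (a \<otimes> b) = inv b \<otimes> (inv a \<otimes> h \<otimes> a) \<otimes> b"
    if "h \<in> L" for h
    using ab that L by (auto simp: m_assoc inv_mult_group)
  then show "a \<otimes> b \<in> normalizer_in M L"
    using a b subgroup.m_closed[OF M] by (auto simp: normalizer_in_def)
qed

lemma subset_normalizer_in:
  assumes L: "subgroup L G" and "L \<subseteq> M"
  shows "L \<subseteq> normalizer_in M L"
  using assms by (auto simp: normalizer_in_def intro!: subgroup.m_closed[OF L] subgroup.m_inv_closed[OF L])

lemma normal_in_normalizer_in:
  assumes M: "subgroup M G" and L: "subgroup L G" "L \<subseteq> M"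
  shows "normal_in L (normalizer_in M L)"
  using subset_normalizer_in[OF L] L by (auto simp: normal_in_def normalizer_in_def)

lemma mem_normalizer_in_if_commutators_mem:
  assumes L: "subgroup L G" and y: "y \<in> M" "y \<in> carrier G"
    and comm: "\<And>r. r \<in> L \<Longrightarrow> y \<otimes> r \<otimes> inv y \<otimes> inv r \<in> L"
    and comm_inv: "\<And>r. r \<in> L \<Longrightarrow> inv y \<otimes> r \<otimes> y \<otimes> inv r \<in> L"
  shows "y \<in> normalizer_in M L"
proof -
  have "y \<otimes> r \<otimes> inv y \<in> L \<and> inv y \<otimes> r \<otimes> y \<in> L" if r: "r \<in> L" for r
  proof -
    have "y \<otimes> r \<otimes> inv y = (y \<otimes> r \<otimes> inv y \<otimes> inv r) \<otimes> r"
      "inv y \<otimes> r \<otimes> y = (inv y \<otimes> r \<otimes> y \<otimes> inv r) \<otimes> r"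
      using subgroup.mem_carrier[OF L r] y(2) by (auto simp: m_assoc)
    then show ?thesis
      using subgroup.m_closed[OF L comm[OF r] r] subgroup.m_closed[OF L comm_inv[OF r] r] by simp
  qed
  then show ?thesis using y(1) by (simp add: normalizer_in_def)
qed

text \<open>In a nilpotent subgroup, normalizers of proper subgroups grow: if \<open>i\<close> is least with
  \<open>\<gamma>\<^sub>i(M) \<subseteq> L\<close>, any \<open>y \<in> \<gamma>\<^sub>i\<^sub>-\<^sub>1(M) - L\<close> has its commutators with \<open>M\<close> in \<open>L\<close>.\<close>

lemma psubset_normalizer_in:
  assumes M: "subgroup M G" and L: "subgroup L G" "L \<subset> M"
    and nil: "lower_central_in G M c = {\<one>}"
  shows "L \<subset> normalizer_in M L"
proof -
  define i where "i = (LEAST i. lower_central_in G M i \<subseteq> L)"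
  have "lower_central_in G M c \<subseteq> L" using nil subgroup.one_closed[OF L(1)] by simp
  then have i: "lower_central_in G M i \<subseteq> L"
    unfolding i_def by (rule LeastI)
  have "i \<noteq> 0" using i L by auto
  then obtain j where ij: "i = Suc j" using not0_implies_Suc by blast
  have "\<not> lower_central_in G M j \<subseteq> L"
    using not_less_Least[of j "\<lambda>i. lower_central_in G M i \<subseteq> L"] ij unfolding i_def by simp
  then obtain y where y: "y \<in> lower_central_in G M j" "y \<notin> L" by blast
  have lcs_j: "subgroup (lower_central_in G M j) G" "lower_central_in G M j \<subseteq> M"
    using subgroup_lower_central_in[OF M] by auto
  have comm: "a \<otimes> r \<otimes> inv a \<otimes> inv r \<in> L" if "a \<in> lower_central_in G M j" "r \<in> L" for a r
    using commutator_mem_comm_subgroup[OF that(1), of r M] that L i ij by auto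
  have yG: "y \<in> carrier G" using subgroup.mem_carrier[OF lcs_j(1) y(1)] .
  have "inv y \<in> lower_central_in G M j" using subgroup.m_inv_closed[OF lcs_j(1) y(1)] .
  then have "inv y \<otimes> r \<otimes> y \<otimes> inv r \<in> L" if "r \<in> L" for r
    using comm[of "inv y" r] that yG by simp
  then have "y \<in> normalizer_in M L"
    using y lcs_j yG comm by (intro mem_normalizer_in_if_commutators_mem[OF L(1)]) auto
  then show ?thesis using subset_normalizer_in[of L M] L y(2) by blast
qed

text \<open>The normalizer \<open>N\<close> of \<open>L\<close> in \<open>M\<close> is strictly larger than \<open>L\<close>, so
  \<open>y\<close> raised to \<open>|M : N|\<close> lies in \<open>N\<close>; raising further to \<open>|N : L|\<close> lands in \<open>L\<close> since \<open>L \<unlhd> N\<close>.\<close>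

theorem nilpotent_pow_index_mem:
  assumes M: "subgroup M G" "finite M" and nil: "lower_central_in G M c = {\<one>}"
  shows "subgroup L G \<Longrightarrow> L \<subseteq> M \<Longrightarrow> y \<in> M \<Longrightarrow> y [^] (card M div card L) \<in> L"
proof (induction "card M - card L" arbitrary: L y rule: less_induct)
  case less
  have yG: "y \<in> carrier G" using less.prems subgroup.mem_carrier[OF M(1)] by blast
  show ?case
  proof (cases "L = M")
    case True
    have "card M > 0" using card_subgroup_pos[OF M] .
    then show ?thesis using True less.prems yG by simp
  next
    case False
    define N where "N = normalizer_in M L"
    have N: "subgroup N G" "N \<subseteq> M" "normal_in L N"
      using normalizer_in_subgroup[OF M(1)] normal_in_normalizer_in[OF M(1) less.prems(1,2)]
        less.prems subgroup.subset[OF less.prems(1)]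
      unfolding N_def by (auto simp: normalizer_in_def)
    have finN: "finite N" using M(2) N(2) finite_subset by blast
    have LN: "card L < card N"
      using psubset_normalizer_in[OF M(1) less.prems(1)] less.prems(2) False nil finN
      unfolding N_def by (meson psubset_card_mono psubsetI)
    moreover have "card N \<le> card M" using card_mono[OF M(2) N(2)] .
    ultimately have "y [^] (card M div card N) \<in> N"
      using less.hyps N less.prems(3) by simp
    then have "(y [^] (card M div card N)) [^] (card N div card L) \<in> L"
      using pow_quotient_order_mem[OF N(1) finN N(3)] by blast
    moreover have "card L dvd card N" "card N dvd card M"
      using card_subgroup_dvd N M(1) less.prems(1,2) by (auto simp: normal_in_def)
    moreover have "card L > 0"
      using card_subgroup_pos[OF less.prems(1)] less.prems(2) M(2) finite_subset by blast
    ultimately show ?thesis using yG LN by (simp add: nat_pow_pow div_mult_div_if_dvd)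
  qed
qed

text \<open>By the second isomorphism theorem \<open>|H : K \<inter> H| = |KH : K|\<close>, so that
  \<open>|G : H| = |G : KH| |K : K \<inter> H|\<close>.\<close>

lemma index_inter_dvd_index:
  assumes fin: "finite (carrier G)" and K: "K \<lhd> G" and H: "subgroup H G"
  shows "card K div card (K \<inter> H) dvd card (rcosets H)"
proof -
  interpret snd: second_isomorphism_grp K G H
    using K H by (simp add: second_isomorphism_grp_def second_isomorphism_grp_axioms_def)
  have Ks: "subgroup K G" using normal_imp_subgroup[OF K] .
  have KH: "subgroup (K <#> H) G" using snd.normal_set_mult_subgroup .
  have KiH: "subgroup (K \<inter> H) G" using subgroups_Inter_pair[OF Ks H] .
  have K_KH: "K \<subseteq> K <#> H"
    using subgroup.one_closed[OF H] subgroup.subset[OF Ks] unfolding set_mult_def by force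
  have "(G\<lparr>carrier := H\<rparr> Mod (K \<inter> H)) \<cong> (G\<lparr>carrier := K <#> H\<rparr> Mod K)"
    using snd.normal_intersection_quotient_isom is_isoI by blast
  then have "card (rcosets\<^bsub>G\<lparr>carrier := H\<rparr>\<^esub> (K \<inter> H)) = card (rcosets\<^bsub>G\<lparr>carrier := K <#> H\<rparr>\<^esub> K)"
    using iso_same_card unfolding FactGroup_def by fastforce
  then obtain a where a: "a * card (K \<inter> H) = card H" "a * card K = card (K <#> H)"
    using lagrange_in_subgroup[OF H KiH] lagrange_in_subgroup[OF KH Ks K_KH] by auto
  obtain c where c: "card K = c * card (K \<inter> H)"
    using lagrange_in_subgroup[OF Ks KiH] by (metis Int_lower1)
  have "card (K <#> H) = c * card H"
    using a c by (metis mult.left_commute)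
  then have "card (rcosets H) * card H = (card (rcosets (K <#> H)) * c) * card H"
    using lagrange[OF H] lagrange[OF KH] by (simp add: ac_simps)
  moreover have "card H \<noteq> 0"
    using card_subgroup_pos[OF H] fin subgroup.subset[OF H] finite_subset by fastforce
  ultimately have "card (rcosets H) = card (rcosets (K <#> H)) * c" by simp
  moreover have "card (K \<inter> H) \<noteq> 0" using a(1) \<open>card H \<noteq> 0\<close> by (metis mult_0_right)
  ultimately show ?thesis using c by simp
qed

lemma nilpotent_normal_pow_index_mem:
  assumes fin: "finite (carrier G)" and K: "K \<lhd> G" and nil: "lower_central_in G K c = {\<one>}"
    and H: "subgroup H G" and z: "z \<in> K"
  shows "z [^] card (rcosets H) \<in> H"
proof -
  have Ks: "subgroup K G" using normal_imp_subgroup[OF K] .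
  have zG: "z \<in> carrier G" using subgroup.mem_carrier[OF Ks z] .
  obtain t where t: "card (rcosets H) = (card K div card (K \<inter> H)) * t"
    using index_inter_dvd_index[OF fin K H] by blast
  have "z [^] (card K div card (K \<inter> H)) \<in> K \<inter> H"
    using nilpotent_pow_index_mem[OF Ks _ nil subgroups_Inter_pair[OF Ks H] _ z]
      fin subgroup.subset[OF Ks] finite_subset by blast
  then have "(z [^] (card K div card (K \<inter> H))) [^] t \<in> H"
    using subgroup_nat_pow_closed[OF H] by blast
  then show ?thesis using t zG by (simp add: nat_pow_pow)
qed

end

section \<open>Finite \<open>p\<close>-groups are nilpotent\<close>

lemma (in group_action) orbit_eq:
  assumes "x \<in> E" "y \<in> orbit G \<phi> x"
  shows "orbit G \<phi> y = orbit G \<phi> x"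
proof -
  have in_E: "z \<in> E" if "w \<in> E" "z \<in> orbit G \<phi> w" for w z
    using that element_image unfolding orbit_def by blast
  then have "y \<in> E" using assms by blast
  then show ?thesis
    using orbit_trans[OF assms(1)] orbit_trans[OF \<open>y \<in> E\<close>] orbit_sym[OF assms(1) _ assms(2)]
      assms in_E by blast
qed

lemma (in group_action) prime_dvd_card_orbit:
  assumes x: "x \<in> E" "orbit G \<phi> x \<noteq> {x}" and fin: "finite (orbit G \<phi> x)"
    and p: "Factorial_Ring.prime (p::nat)" and ord: "order G = p ^ k"
  shows "p dvd card (orbit G \<phi> x)"
proof -
  have "card (orbit G \<phi> x) dvd p ^ k"
    using orbit_stabilizer_theorem[OF x(1)] ord by (metis dvd_triv_left)
  then obtain j where j: "card (orbit G \<phi> x) = p ^ j"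
    using p by (auto simp: divides_primepow_nat)
  have "card (orbit G \<phi> x) \<noteq> 1"
    using x orbit_refl[OF x(1)] by (auto simp: card_Suc_eq)
  then have "j \<noteq> 0" using j by auto
  then show ?thesis using j by (simp add: dvd_power)
qed

text \<open>Orbits of a \<open>p\<close>-group have \<open>p\<close>-power size, so the points that are not fixed fall into
  orbits of size divisible by \<open>p\<close>.\<close>

lemma (in group_action) prime_dvd_card_non_fixed_points:
  assumes fin: "finite A" and AE: "A \<subseteq> E"
    and invar: "\<And>g x. g \<in> carrier G \<Longrightarrow> x \<in> A \<Longrightarrow> \<phi> g x \<in> A"
    and p: "Factorial_Ring.prime (p::nat)" and ord: "order G = p ^ k"
  shows "p dvd card {x \<in> A. \<exists>g\<in>carrier G. \<phi> g x \<noteq> x}"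
proof -
  define Y where "Y = {x \<in> A. \<exists>g\<in>carrier G. \<phi> g x \<noteq> x}"
  have fixed_iff: "orbit G \<phi> x = {x} \<longleftrightarrow> (\<forall>g\<in>carrier G. \<phi> g x = x)" if "x \<in> E" for x
    using orbit_refl[OF that] by (auto simp: orbit_def)
  have orbit_A: "orbit G \<phi> x \<subseteq> A" if "x \<in> A" for x
    using invar that by (auto simp: orbit_def)
  have orbit_Y: "orbit G \<phi> y \<subseteq> Y" if y: "y \<in> Y" for y
  proof
    fix z assume z: "z \<in> orbit G \<phi> y"
    have yE: "y \<in> E" "y \<in> A" using y AE by (auto simp: Y_def)
    have "orbit G \<phi> y \<noteq> {y}" using y fixed_iff[OF yE(1)] by (auto simp: Y_def)
    then have "orbit G \<phi> z \<noteq> {z}"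
      using orbit_eq[OF yE(1) z] orbit_refl[OF yE(1)] by auto
    moreover have "z \<in> A" using orbit_A[OF yE(2)] z by blast
    ultimately show "z \<in> Y" using fixed_iff AE by (auto simp: Y_def)
  qed
  have "Y = \<Union> (orbit G \<phi> ` Y)"
    using orbit_Y orbit_refl AE unfolding Y_def by blast
  moreover have "p dvd card (\<Union> (orbit G \<phi> ` Y))"
  proof (rule dvd_partition)
    show "finite (\<Union> (orbit G \<phi> ` Y))"
      using orbit_Y fin by (auto simp: Y_def intro: finite_subset)
    show "\<forall>c\<in>orbit G \<phi> ` Y. p dvd card c"
    proof
      fix c assume "c \<in> orbit G \<phi> ` Y"
      then obtain y where y: "y \<in> Y" "c = orbit G \<phi> y" by blast
      then have "y \<in> E" "orbit G \<phi> y \<noteq> {y}" "finite (orbit G \<phi> y)"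
        using fixed_iff orbit_A fin AE by (auto simp: Y_def intro: finite_subset[OF orbit_A])
      then show "p dvd card c" using prime_dvd_card_orbit[OF _ _ _ p ord] y(2) by blast
    qed
    show "\<forall>c1\<in>orbit G \<phi> ` Y. \<forall>c2\<in>orbit G \<phi> ` Y. c1 \<noteq> c2 \<longrightarrow> c1 \<inter> c2 = {}"
      using disjoint_union AE by (auto simp: Y_def orbits_def)
  qed
  ultimately show ?thesis by (simp add: Y_def)
qed

fun upper_central_in :: "('a, 'b) monoid_scheme \<Rightarrow> 'a set \<Rightarrow> nat \<Rightarrow> 'a set" where
  "upper_central_in G P 0 = {\<one>\<^bsub>G\<^esub>}"
| "upper_central_in G P (Suc n) =
     {x \<in> P. \<forall>g\<in>P. x \<otimes>\<^bsub>G\<^esub> g \<otimes>\<^bsub>G\<^esub> inv\<^bsub>G\<^esub> x \<otimes>\<^bsub>G\<^esub> inv\<^bsub>G\<^esub> g \<in> upper_central_in G P n}"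

context group begin

lemma normal_in_center_mod:
  assumes P: "subgroup P G" and Z: "normal_in Z P"
  shows "normal_in {x \<in> P. \<forall>g\<in>P. x \<otimes> g \<otimes> inv x \<otimes> inv g \<in> Z} P"
    (is "normal_in ?C P")
proof -
  have Zs: "subgroup Z G" and conj: "\<And>g z. g \<in> P \<Longrightarrow> z \<in> Z \<Longrightarrow> g \<otimes> z \<otimes> inv g \<in> Z"
    using Z by (auto simp: normal_in_def)
  have PG: "\<And>x. x \<in> P \<Longrightarrow> x \<in> carrier G" using subgroup.mem_carrier[OF P] .
  have mult: "x \<otimes> y \<in> ?C" if x: "x \<in> ?C" and y: "y \<in> ?C" for x y
  proof -
    have "x \<otimes> y \<otimes> g \<otimes> inv (x \<otimes> y) \<otimes> inv g
        = (x \<otimes> (y \<otimes> g \<otimes> inv y \<otimes> inv g) \<otimes> inv x) \<otimes> (x \<otimes> g \<otimes> inv x \<otimes> inv g)"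
      if "g \<in> P" for g
      using x y that PG by (simp add: m_assoc inv_mult_group)
    then show ?thesis
      using x y conj subgroup.m_closed[OF Zs] subgroup.m_closed[OF P] by auto
  qed
  have inv: "inv x \<in> ?C" if x: "x \<in> ?C" for x
  proof -
    have "inv x \<otimes> g \<otimes> inv (inv x) \<otimes> inv g = inv x \<otimes> inv (x \<otimes> g \<otimes> inv x \<otimes> inv g) \<otimes> inv (inv x)"
      if "g \<in> P" for g
      using x that PG by (simp add: m_assoc inv_mult_group)
    then show ?thesis
      using x conj subgroup.m_inv_closed[OF Zs] subgroup.m_inv_closed[OF P] by auto
  qed
  have "subgroup ?C G"
  proof (rule subgroupI)
    have "\<one> \<in> ?C" using subgroup.one_closed[OF P] subgroup.one_closed[OF Zs] PG by simp
    then show "?C \<noteq> {}" by blast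
  qed (use PG mult inv in auto)
  moreover have "h \<otimes> x \<otimes> inv h \<in> ?C" if h: "h \<in> P" and x: "x \<in> ?C" for h x
  proof -
    have "h \<otimes> x \<otimes> inv h \<otimes> g \<otimes> inv (h \<otimes> x \<otimes> inv h) \<otimes> inv g
        = h \<otimes> (x \<otimes> (inv h \<otimes> g \<otimes> h) \<otimes> inv x \<otimes> inv (inv h \<otimes> g \<otimes> h)) \<otimes> inv h"
      if "g \<in> P" for g
      using x h that PG by (simp add: m_assoc inv_mult_group)
    then show ?thesis
      using x h conj subgroup.m_closed[OF P] subgroup.m_inv_closed[OF P] by auto
  qed
  ultimately show ?thesis by (auto simp: normal_in_def)
qed

lemma normal_in_upper_central_in:
  assumes P: "subgroup P G"
  shows "normal_in (upper_central_in G P n) P"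
proof (induction n)
  case 0
  show ?case
    using P subgroup.one_closed[OF P] subgroup.mem_carrier[OF P] triv_subgroup
    by (auto simp: normal_in_def)
next
  case (Suc n)
  then show ?case using normal_in_center_mod[OF P] by simp
qed

lemma prime_dvd_index_proper_subgroup:
  assumes P: "subgroup P G" "finite P" and p: "Factorial_Ring.prime (p::nat)"
    and card_P: "card P = p ^ k" and Z: "subgroup Z G" "Z \<subset> P"
  shows "p dvd card (rcosets\<^bsub>G\<lparr>carrier := P\<rparr>\<^esub> Z)"
proof -
  have index: "card (rcosets\<^bsub>G\<lparr>carrier := P\<rparr>\<^esub> Z) * card Z = p ^ k"
    using lagrange_in_subgroup[OF P(1) Z(1)] Z(2) card_P by auto
  then obtain j where j: "card (rcosets\<^bsub>G\<lparr>carrier := P\<rparr>\<^esub> Z) = p ^ j"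
    using p by (metis dvd_triv_left divides_primepow_nat)
  have "j \<noteq> 0"
  proof
    assume "j = 0"
    then have "card Z = card P" using index j card_P by simp
    then show False using card_subset_eq[OF P(2)] Z(2) by blast
  qed
  then show ?thesis using j by (simp add: dvd_power)
qed

text \<open>Conjugation by \<open>P\<close> permutes the cosets of \<open>Z\<close> in \<open>P\<close>, whose number is divisible by \<open>p\<close>; as
  the non-fixed cosets come in orbits of size divisible by \<open>p\<close>, so do the fixed ones.\<close>

lemma prime_dvd_card_fixed_rcosets:
  assumes P: "subgroup P G" "finite P" and p: "Factorial_Ring.prime (p::nat)"
    and card_P: "card P = p ^ k" and Z: "normal_in Z P" "Z \<noteq> P"
  shows "p dvd card {Z #> x | x. x \<in> P \<and> (\<forall>g\<in>P. Z #> (g \<otimes> x \<otimes> inv g) = Z #> x)}"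
proof -
  have ZP: "Z \<subset> P" and Zs: "subgroup Z G" using Z by (auto simp: normal_in_def)
  define \<phi> where "\<phi> = (\<lambda>g. \<lambda>H\<in>{H. H \<subseteq> carrier G}. g <# H #> inv g)"
  interpret act: group_action "G\<lparr>carrier := P\<rparr>" "{H. H \<subseteq> carrier G}" \<phi>
    unfolding \<phi>_def using group_action.induced_action[OF action_by_conjugation_on_power_set P(1)] .
  define A where "A = rcosets\<^bsub>G\<lparr>carrier := P\<rparr>\<^esub> Z"
  have A_eq: "A = {Z #> x | x. x \<in> P}" by (auto simp: A_def RCOSETS_def)
  have coset_sub: "Z #> x \<subseteq> carrier G" if "x \<in> P" for x
    using r_coset_subset_G[OF subgroup.subset[OF Zs]] that subgroup.mem_carrier[OF P(1)] by blast
  have conj: "\<phi> g (Z #> x) = Z #> (g \<otimes> x \<otimes> inv g)" if "g \<in> P" "x \<in> P" for g x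
    unfolding \<phi>_def using coset_sub[OF that(2)] normal_in_conj_rcos[OF Z(1) P(1) that] by simp
  have finA: "finite A" unfolding A_eq using P(2) by auto
  have "A \<subseteq> {H. H \<subseteq> carrier G}" using coset_sub by (auto simp: A_eq)
  moreover have "\<phi> g C \<in> A" if "g \<in> carrier (G\<lparr>carrier := P\<rparr>)" "C \<in> A" for g C
    using that conj by (auto simp: A_eq intro!: subgroup.m_closed[OF P(1)] subgroup.m_inv_closed[OF P(1)])
  moreover have "order (G\<lparr>carrier := P\<rparr>) = p ^ k" using card_P by (simp add: order_def)
  ultimately have "p dvd card {C \<in> A. \<exists>g\<in>P. \<phi> g C \<noteq> C}"
    using act.prime_dvd_card_non_fixed_points[OF finA _ _ p] by simp
  moreover define Fix where "Fix = {C \<in> A. \<forall>g\<in>P. \<phi> g C = C}"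
  moreover have "{C \<in> A. \<exists>g\<in>P. \<phi> g C \<noteq> C} = A - Fix" by (auto simp: Fix_def)
  moreover have "Fix \<subseteq> A" by (auto simp: Fix_def)
  then have "card A = card Fix + card (A - Fix)"
    using card_Diff_subset[OF finite_subset[OF _ finA]] card_mono[OF finA] by fastforce
  ultimately have "p dvd card Fix"
    using prime_dvd_index_proper_subgroup[OF P p card_P Zs ZP] by (metis A_def dvd_add_left_iff)
  moreover have "Fix = {Z #> x | x. x \<in> P \<and> (\<forall>g\<in>P. Z #> (g \<otimes> x \<otimes> inv g) = Z #> x)}"
    by (auto simp: Fix_def A_eq conj)
  ultimately show ?thesis by simp
qed

text \<open>The cosets of \<open>Z\<close> that are central in \<open>P/Z\<close> include \<open>Z\<close>, and their number is divisible
  by \<open>p\<close>.\<close>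

lemma exists_central_mod_notin:
  assumes P: "subgroup P G" "finite P" and p: "Factorial_Ring.prime (p::nat)"
    and card_P: "card P = p ^ k" and Z: "normal_in Z P" and ne: "Z \<noteq> P"
  shows "\<exists>x\<in>P. x \<notin> Z \<and> (\<forall>g\<in>P. x \<otimes> g \<otimes> inv x \<otimes> inv g \<in> Z)"
proof -
  have PG: "\<And>x. x \<in> P \<Longrightarrow> x \<in> carrier G" using subgroup.mem_carrier[OF P(1)] .
  have Zs: "subgroup Z G" using Z by (auto simp: normal_in_def)
  define Fix where "Fix = {Z #> x | x. x \<in> P \<and> (\<forall>g\<in>P. Z #> (g \<otimes> x \<otimes> inv g) = Z #> x)}"
  have "Z #> \<one> \<in> Fix" using subgroup.one_closed[OF P(1)] PG by (auto simp: Fix_def)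
  then have "Z \<in> Fix" using subgroup.subset[OF Zs] by simp
  moreover have "finite Fix"
    using P(2) by (auto simp: Fix_def intro: finite_subset[OF _ finite_imageI[of P "\<lambda>x. Z #> x"]])
  moreover have "p dvd card Fix"
    using prime_dvd_card_fixed_rcosets[OF P p card_P Z ne] by (simp add: Fix_def)
  ultimately have "card Fix \<ge> p" by (auto simp: card_gt_0_iff intro: dvd_imp_le)
  then have "\<not> Fix \<subseteq> {Z}"
    using prime_ge_2_nat[OF p] card_mono[OF finite.insertI[OF finite.emptyI], of Fix Z] by auto
  then obtain x where x: "x \<in> P" "Z #> x \<noteq> Z" and fixed: "\<And>g. g \<in> P \<Longrightarrow> Z #> (g \<otimes> x \<otimes> inv g) = Z #> x"
    by (auto simp: Fix_def)
  have "x \<notin> Z" using x subgroup.rcos_const[OF Zs is_group] by blast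
  moreover have "x \<otimes> g \<otimes> inv x \<otimes> inv g \<in> Z" if g: "g \<in> P" for g
  proof -
    have "g \<otimes> x \<otimes> inv g \<otimes> inv x \<in> Z"
      using fixed[OF g] rcos_eq_iff[OF Zs] g x PG by simp
    then have "inv (g \<otimes> x \<otimes> inv g \<otimes> inv x) \<in> Z" by (rule subgroup.m_inv_closed[OF Zs])
    then show ?thesis using g x PG by (simp add: m_assoc inv_mult_group)
  qed
  ultimately show ?thesis using x(1) by blast
qed

lemma upper_central_in_mono:
  assumes P: "subgroup P G"
  shows "upper_central_in G P n \<subseteq> upper_central_in G P (Suc n)"
proof
  fix z assume z: "z \<in> upper_central_in G P n"
  have Zs: "subgroup (upper_central_in G P n) G" and ZP: "upper_central_in G P n \<subseteq> P"
    and conj: "\<And>g z. g \<in> P \<Longrightarrow> z \<in> upper_central_in G P n \<Longrightarrow> g \<otimes> z \<otimes> inv g \<in> upper_central_in G P n"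
    using normal_in_upper_central_in[OF P] by (auto simp: normal_in_def)
  have "z \<otimes> g \<otimes> inv z \<otimes> inv g = z \<otimes> (g \<otimes> inv z \<otimes> inv g)" if "g \<in> P" for g
    using z ZP that subgroup.mem_carrier[OF P] by (auto simp: m_assoc)
  then show "z \<in> upper_central_in G P (Suc n)"
    using z ZP conj subgroup.m_closed[OF Zs] subgroup.m_inv_closed[OF Zs] by auto
qed

lemma upper_central_in_grows:
  assumes P: "subgroup P G" "finite P" and p: "Factorial_Ring.prime (p::nat)"
    and card_P: "card P = p ^ k"
  shows "upper_central_in G P n = P \<or> n < card (upper_central_in G P n)"
proof (induction n)
  case (Suc n)
  have sub: "upper_central_in G P (Suc n) \<subseteq> P"
    using normal_in_upper_central_in[OF P(1)] by (simp add: normal_in_def)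
  show ?case
  proof (cases "upper_central_in G P n = P")
    case True
    then have "P \<subseteq> upper_central_in G P (Suc n)"
      by (auto intro!: subgroup.m_closed[OF P(1)] subgroup.m_inv_closed[OF P(1)])
    then show ?thesis using sub by blast
  next
    case False
    then obtain x where x: "x \<in> P" "x \<notin> upper_central_in G P n"
      "\<forall>g\<in>P. x \<otimes> g \<otimes> inv x \<otimes> inv g \<in> upper_central_in G P n"
      using exists_central_mod_notin[OF P p card_P normal_in_upper_central_in[OF P(1)]] by blast
    then have "upper_central_in G P n \<subset> upper_central_in G P (Suc n)"
      using upper_central_in_mono[OF P(1), of n] by auto
    then have "card (upper_central_in G P n) < card (upper_central_in G P (Suc n))"
      using psubset_card_mono finite_subset[OF sub P(2)] by blast
    then show ?thesis using Suc False by simp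
  qed
qed simp

lemma upper_central_in_card_eq:
  assumes P: "subgroup P G" "finite P" and p: "Factorial_Ring.prime (p::nat)"
    and card_P: "card P = p ^ k"
  shows "upper_central_in G P (card P) = P"
proof -
  have "upper_central_in G P (card P) \<subseteq> P"
    using normal_in_upper_central_in[OF P(1)] by (simp add: normal_in_def)
  then have "card (upper_central_in G P (card P)) \<le> card P" using card_mono[OF P(2)] by blast
  then show ?thesis using upper_central_in_grows[OF P p card_P, of "card P"] by simp
qed

lemma lower_central_in_subset_upper_central_in:
  assumes P: "subgroup P G" and top: "upper_central_in G P m = P"
  shows "j \<le> m \<Longrightarrow> lower_central_in G P j \<subseteq> upper_central_in G P (m - j)"
proof (induction j)
  case (Suc j)
  then have IH: "lower_central_in G P j \<subseteq> upper_central_in G P (Suc (m - Suc j))"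
    by (simp add: Suc_diff_Suc)
  have "subgroup (upper_central_in G P (m - Suc j)) G"
    using normal_in_upper_central_in[OF P] by (simp add: normal_in_def)
  then have "comm_subgroup G (lower_central_in G P j) P \<subseteq> upper_central_in G P (m - Suc j)"
    using IH by (intro comm_subgroup_subset) auto
  then show ?case by simp
qed (use top in simp)

theorem prime_power_subgroup_nilpotent:
  assumes P: "subgroup P G" "finite P" and p: "Factorial_Ring.prime (p::nat)"
    and card_P: "card P = p ^ k"
  shows "lower_central_in G P (card P) = {\<one>}"
proof -
  have "lower_central_in G P (card P) \<subseteq> upper_central_in G P 0"
    using lower_central_in_subset_upper_central_in[OF P(1) upper_central_in_card_eq[OF P p card_P],
      of "card P"] by simp
  moreover have "\<one> \<in> lower_central_in G P (card P)"
    using subgroup_lower_central_in[OF P(1)] subgroup.one_closed by blast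
  ultimately show ?thesis by auto
qed

end

context group begin

lemma S_set_pow_closed:
  assumes "x \<in> S_set G"
  shows "x [^] (n::nat) \<in> S_set G"
proof -
  have "(x [^] n) [^] card (rcosets H) = (x [^] card (rcosets H)) [^] n" if "x \<in> carrier G" for H
    using that by (simp add: nat_pow_pow mult.commute)
  then show ?thesis
    using assms subgroup_nat_pow_closed by (auto simp: S_set_def)
qed

lemma S_set_mult_closed:
  assumes "x \<in> S_set G" "y \<in> S_set G" "x \<otimes> y = y \<otimes> x"
  shows "x \<otimes> y \<in> S_set G"
proof -
  have xy: "x \<in> carrier G" "y \<in> carrier G" using assms(1,2) by (auto simp: S_set_def)
  have "(x \<otimes> y) [^] card (rcosets H) \<in> H" if "subgroup H G" "finite (rcosets H)" for H
    using assms(1,2) that pow_mult_distrib[OF assms(3) xy] subgroup.m_closed[OF that(1)]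
    by (simp add: S_set_def)
  then show ?thesis using xy by (simp add: S_set_def)
qed

lemma mem_S_set_finite_iff:
  assumes "finite (carrier G)"
  shows "x \<in> S_set G \<longleftrightarrow> x \<in> carrier G \<and> (\<forall>H. subgroup H G \<longrightarrow> x [^] card (rcosets H) \<in> H)"
proof -
  have "finite (rcosets H)" if "subgroup H G" for H
    using assms rcosets_subset_PowG[OF that] finite_subset by (metis finite_Pow_iff)
  then show ?thesis by (auto simp: S_set_def)
qed

theorem nilpotent_normal_subset_S_set:
  assumes "finite (carrier G)" "K \<lhd> G" "lower_central_in G K c = {\<one>}"
  shows "K \<subseteq> S_set G"
  using nilpotent_normal_pow_index_mem[OF assms] subgroup.mem_carrier[OF normal_imp_subgroup[OF assms(2)]]
  by (auto simp: mem_S_set_finite_iff[OF assms(1)])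

end

section \<open>Sylow subgroups and \<open>O\<^sub>p(G)\<close>\<close>

context group begin

definition sylow_subgroup :: "nat \<Rightarrow> 'a set \<Rightarrow> bool" where
  "sylow_subgroup p P \<longleftrightarrow> subgroup P G \<and> card P = p ^ multiplicity p (order G)"

text \<open>\<open>p_core p\<close> is \<open>O\<^sub>p(G)\<close>, the largest normal \<open>p\<close>-subgroup.\<close>

definition p_core :: "nat \<Rightarrow> 'a set" where
  "p_core p = \<Inter>{P. sylow_subgroup p P}"

lemma sylow_subgroup_exists:
  assumes "finite (carrier G)" "Factorial_Ring.prime (p::nat)"
  shows "\<exists>P. sylow_subgroup p P"
  using sylow_thm[OF assms(2) is_group _ assms(1), of "multiplicity p (order G)"]
    multiplicity_dvd[of p "order G"]
  by (auto simp: sylow_subgroup_def dvd_def)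

lemma sylow_subgroup_index_not_dvd:
  assumes fin: "finite (carrier G)" and p: "Factorial_Ring.prime (p::nat)"
    and P: "sylow_subgroup p P"
  shows "\<not> p dvd card (rcosets P)"
proof -
  have "card (rcosets P) = order G div p ^ multiplicity p (order G)"
    using card_rcosets_eq_div[OF fin] P by (simp add: sylow_subgroup_def)
  then show ?thesis
    using multiplicity_decompose[of "order G" p] prime_gt_1_nat[OF p] fin
    by (simp add: order_gt_0_iff_finite[symmetric])
qed

lemma sylow_subgroup_conj:
  assumes P: "sylow_subgroup p P" and g: "g \<in> carrier G"
  shows "sylow_subgroup p (inv g <# P #> g)"
proof -
  have Ps: "subgroup P G" using P by (simp add: sylow_subgroup_def)
  have "inv g <# P #> g = (\<lambda>y. inv g \<otimes> y \<otimes> g) ` P"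
    by (auto simp: l_coset_def r_coset_def)
  moreover have "inj_on (\<lambda>y. inv g \<otimes> y \<otimes> g) P"
    using conjugation_is_inj[of "inv g"] g subgroup.mem_carrier[OF Ps]
    by (auto intro!: inj_onI)
  ultimately have "card (inv g <# P #> g) = card P" by (simp add: card_image)
  then show ?thesis
    using subgroup_conjugation_is_surj1[OF g Ps] P by (simp add: sylow_subgroup_def)
qed

lemma p_core_normal:
  assumes fin: "finite (carrier G)" and p: "Factorial_Ring.prime (p::nat)"
  shows "p_core p \<lhd> G"
proof -
  obtain P0 where "sylow_subgroup p P0" using sylow_subgroup_exists[OF fin p] by blast
  then have "subgroup (p_core p) G"
    unfolding p_core_def by (intro subgroups_Inter) (auto simp: sylow_subgroup_def)
  then show ?thesis
  proof (rule normal_invI)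
    fix g h assume g: "g \<in> carrier G" and h: "h \<in> p_core p"
    show "g \<otimes> h \<otimes> inv g \<in> p_core p"
      unfolding p_core_def
    proof
      fix P assume "P \<in> {P. sylow_subgroup p P}"
      then have P: "sylow_subgroup p P" by simp
      then have "h \<in> inv g <# P #> g"
        using h sylow_subgroup_conj[OF P g] by (auto simp: p_core_def)
      then obtain y where "y \<in> P" "h = inv g \<otimes> y \<otimes> g"
        by (auto simp: l_coset_def r_coset_def)
      moreover have "y \<in> carrier G"
        using \<open>y \<in> P\<close> P subgroup.mem_carrier by (auto simp: sylow_subgroup_def)
      ultimately show "g \<otimes> h \<otimes> inv g \<in> P" using g by (simp add: m_assoc)
    qed
  qed
qed

lemma p_core_card:
  assumes fin: "finite (carrier G)" and p: "Factorial_Ring.prime (p::nat)"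
  shows "\<exists>j. card (p_core p) = p ^ j"
proof -
  obtain P where P: "sylow_subgroup p P" using sylow_subgroup_exists[OF fin p] by blast
  have "p_core p \<subseteq> P" using P by (auto simp: p_core_def)
  then have "card (p_core p) dvd card P"
    using card_subgroup_dvd[of P "p_core p"] normal_imp_subgroup[OF p_core_normal[OF fin p]] P
    by (simp add: sylow_subgroup_def)
  then show ?thesis using P p by (auto simp: sylow_subgroup_def divides_primepow_nat)
qed

lemma p_core_nilpotent:
  assumes fin: "finite (carrier G)" and p: "Factorial_Ring.prime (p::nat)"
  shows "lower_central_in G (p_core p) (card (p_core p)) = {\<one>}"
proof -
  have "subgroup (p_core p) G" using normal_imp_subgroup[OF p_core_normal[OF fin p]] .
  then show ?thesis
    using prime_power_subgroup_nilpotent[OF _ _ p] p_core_card[OF fin p] fin subgroup.subset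
      finite_subset by metis
qed

lemma ord_p_core:
  assumes fin: "finite (carrier G)" and p: "Factorial_Ring.prime (p::nat)" and x: "x \<in> p_core p"
  shows "\<exists>j. ord x = p ^ j"
proof -
  have "subgroup (p_core p) G" using normal_imp_subgroup[OF p_core_normal[OF fin p]] .
  interpret core: group "G\<lparr>carrier := p_core p\<rparr>" using subgroup_imp_group[OF \<open>subgroup _ G\<close>] .
  obtain j where "card (p_core p) = p ^ j" using p_core_card[OF fin p] by blast
  moreover have "x [^] card (p_core p) = \<one>"
    using core.pow_order_eq_1 x fin \<open>subgroup _ G\<close> subgroup.subset finite_subset
    by (fastforce simp: order_def simp flip: nat_pow_consistent)
  ultimately show ?thesis
    using pow_eq_id subgroup.mem_carrier[OF \<open>subgroup _ G\<close> x] p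
    by (auto simp: divides_primepow_nat)
qed

lemma prime_dvd_ord_p_core:
  assumes fin: "finite (carrier G)" and p: "Factorial_Ring.prime (p::nat)" and x: "x \<in> p_core p"
    and q: "Factorial_Ring.prime q" "q dvd ord x"
  shows "q = p"
proof -
  obtain j where "ord x = p ^ j" using ord_p_core[OF fin p x] by blast
  then show ?thesis using q p by (metis prime_dvd_power_nat primes_dvd_imp_eq)
qed

lemma p_core_eq_one_if_not_dvd_ord:
  assumes fin: "finite (carrier G)" and p: "Factorial_Ring.prime (p::nat)" and x: "x \<in> p_core p"
    and "\<not> p dvd ord x"
  shows "x = \<one>"
proof -
  obtain j where j: "ord x = p ^ j" using ord_p_core[OF fin p x] by blast
  then have "ord x = 1" using assms(4) by (cases j) auto
  moreover have "x \<in> carrier G"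
    using x subgroup.mem_carrier[OF normal_imp_subgroup[OF p_core_normal[OF fin p]]] by blast
  ultimately show ?thesis using ord_eq_1 by blast
qed

text \<open>An element of \<open>S(G)\<close> of \<open>p\<close>-power order lies in every Sylow \<open>p\<close>-subgroup \<open>P\<close>: its power
  to the exponent \<open>|G:P|\<close>, which is prime to \<open>p\<close>, already lies in \<open>P\<close>.\<close>

lemma S_set_prime_power_order_mem_p_core:
  assumes fin: "finite (carrier G)" and p: "Factorial_Ring.prime (p::nat)"
    and z: "z \<in> S_set G" and oz: "ord z = p ^ j"
  shows "z \<in> p_core p"
  unfolding p_core_def
proof
  fix P assume "P \<in> {P. sylow_subgroup p P}"
  then have P: "sylow_subgroup p P" "subgroup P G" by (auto simp: sylow_subgroup_def)
  have zG: "z \<in> carrier G" using z by (simp add: S_set_def)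
  have "z [^] card (rcosets P) \<in> P" using z P(2) by (simp add: mem_S_set_finite_iff[OF fin])
  moreover have "z [^] ord z \<in> P" using zG subgroup.one_closed[OF P(2)] by simp
  moreover have "\<not> p dvd card (rcosets P)" using sylow_subgroup_index_not_dvd[OF fin p P(1)] .
  then have "card (rcosets P) \<noteq> 0" "coprime (card (rcosets P)) (ord z)"
    using prime_imp_coprime[OF p] unfolding oz by (metis dvd_0_right, simp add: coprime_commute[of _ p])
  ultimately show "z \<in> P" using mem_subgroup_if_coprime_pows[OF P(2) zG] by blast
qed

end

section \<open>Finite groups: \<open>S(G) = F(G)\<close>\<close>

primrec p_core_product :: "('a, 'b) monoid_scheme \<Rightarrow> nat list \<Rightarrow> 'a set" where
  "p_core_product G [] = {\<one>\<^bsub>G\<^esub>}"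
| "p_core_product G (p # ps) = group.p_core G p <#>\<^bsub>G\<^esub> p_core_product G ps"

context group begin

lemma normal_elements_commute:
  assumes A: "A \<lhd> G" and B: "B \<lhd> G" and AB: "A \<inter> B \<subseteq> {\<one>}" and a: "a \<in> A" and b: "b \<in> B"
  shows "a \<otimes> b = b \<otimes> a"
proof -
  have As: "subgroup A G" and Bs: "subgroup B G" using normal_imp_subgroup A B by auto
  have aG: "a \<in> carrier G" and bG: "b \<in> carrier G"
    using subgroup.mem_carrier[OF As a] subgroup.mem_carrier[OF Bs b] by auto
  have comm: "a \<otimes> b \<otimes> inv a \<otimes> inv b = a \<otimes> (b \<otimes> inv a \<otimes> inv b)"
    using aG bG by (simp add: m_assoc)
  have "b \<otimes> inv a \<otimes> inv b \<in> A" using normal_invE(2)[OF A bG subgroup.m_inv_closed[OF As a]] .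
  then have "a \<otimes> b \<otimes> inv a \<otimes> inv b \<in> A" using comm subgroup.m_closed[OF As a] by simp
  moreover have "a \<otimes> b \<otimes> inv a \<otimes> inv b \<in> B"
    using normal_invE(2)[OF B aG b] subgroup.m_closed[OF Bs _ subgroup.m_inv_closed[OF Bs b]] by blast
  ultimately have "a \<otimes> b \<otimes> inv a \<otimes> inv b = \<one>" using AB by auto
  moreover have "a \<otimes> b = (a \<otimes> b \<otimes> inv a \<otimes> inv b) \<otimes> (b \<otimes> a)" using aG bG by (simp add: m_assoc)
  ultimately show ?thesis using aG bG by simp
qed

lemma set_mult_subset_S_set:
  assumes "A \<lhd> G" "B \<lhd> G" "A \<inter> B \<subseteq> {\<one>}" "A \<subseteq> S_set G" "B \<subseteq> S_set G"
  shows "A <#> B \<subseteq> S_set G"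
  using S_set_mult_closed normal_elements_commute[OF assms(1-3)] assms(4,5)
  unfolding set_mult_def by blast

lemma prime_dvd_ord_mult:
  assumes ab: "a \<otimes> b = b \<otimes> a" "a \<in> carrier G" "b \<in> carrier G"
    and q: "Factorial_Ring.prime (q::nat)" "q dvd ord (a \<otimes> b)"
  shows "q dvd ord a \<or> q dvd ord b"
proof -
  have "a [^] (ord a * ord b) = \<one>" "b [^] (ord a * ord b) = \<one>"
    using ab(2,3) by (metis mult.commute nat_pow_pow pow_ord_eq_1 nat_pow_one)+
  then have "(a \<otimes> b) [^] (ord a * ord b) = \<one>" using pow_mult_distrib[OF ab] by simp
  then have "ord (a \<otimes> b) dvd ord a * ord b" using pow_eq_id ab(2,3) by simp
  then show ?thesis using q prime_dvd_mult_iff dvd_trans by metis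
qed

lemma p_core_subset_S_set:
  assumes "finite (carrier G)" "Factorial_Ring.prime (p::nat)"
  shows "p_core p \<subseteq> S_set G"
  using nilpotent_normal_subset_S_set[OF assms(1) p_core_normal[OF assms] p_core_nilpotent[OF assms]] .

text \<open>The prime divisors of element orders in the product stay within \<open>ps\<close>, so each new factor
  \<open>O\<^sub>p(G)\<close> meets the product trivially and commutes with it elementwise; \<open>S(G)\<close> is closed
  under products of commuting elements.\<close>

lemma p_core_product_props:
  assumes fin: "finite (carrier G)"
  shows "distinct ps \<Longrightarrow> \<forall>p\<in>set ps. Factorial_Ring.prime p \<Longrightarrow>
    p_core_product G ps \<lhd> G \<and> p_core_product G ps \<subseteq> S_set G
    \<and> (\<forall>x\<in>p_core_product G ps. \<forall>q. Factorial_Ring.prime q \<longrightarrow> q dvd ord x \<longrightarrow> q \<in> set ps)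
    \<and> (\<forall>p\<in>set ps. p_core p \<subseteq> p_core_product G ps)"
proof (induction ps)
  case Nil
  have "\<one> \<in> S_set G" using subgroup.one_closed by (auto simp: S_set_def)
  then show ?case using one_is_normal by (auto dest: prime_gt_1_nat)
next
  case (Cons p ps)
  have p: "Factorial_Ring.prime p" and "p \<notin> set ps" using Cons.prems by auto
  define A where "A = p_core p"
  define B where "B = p_core_product G ps"
  have A: "A \<lhd> G" "A \<subseteq> S_set G" "A \<subseteq> carrier G"
    using p_core_normal[OF fin p] p_core_subset_S_set[OF fin p]
      subgroup.subset[OF normal_imp_subgroup[OF p_core_normal[OF fin p]]]
    by (auto simp: A_def)
  have B: "B \<lhd> G" "B \<subseteq> S_set G"
    "\<And>x q. x \<in> B \<Longrightarrow> Factorial_Ring.prime q \<Longrightarrow> q dvd ord x \<Longrightarrow> q \<in> set ps"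
    "\<And>q. q \<in> set ps \<Longrightarrow> p_core q \<subseteq> B"
    using Cons by (auto simp: B_def)
  have "B \<subseteq> carrier G" using subgroup.subset[OF normal_imp_subgroup[OF B(1)]] .
  have "A \<inter> B \<subseteq> {\<one>}"
    using p_core_eq_one_if_not_dvd_ord[OF fin p] B(3) p \<open>p \<notin> set ps\<close> by (auto simp: A_def)
  then have "p_core_product G (p # ps) \<subseteq> S_set G"
    using set_mult_subset_S_set[OF A(1) B(1)] A(2) B(2) by (simp add: A_def B_def)
  moreover have "p_core_product G (p # ps) \<lhd> G"
    using normal_subgroup_set_mult_closed[OF A(1) B(1)] by (simp add: A_def B_def)
  moreover have "q = p \<or> q \<in> set ps"
    if x: "x \<in> p_core_product G (p # ps)" and q: "Factorial_Ring.prime q" "q dvd ord x" for x q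
  proof -
    obtain a b where ab: "a \<in> A" "b \<in> B" "x = a \<otimes> b"
      using x by (auto simp: set_mult_def A_def B_def)
    then have "q dvd ord a \<or> q dvd ord b"
      using prime_dvd_ord_mult normal_elements_commute[OF A(1) B(1) \<open>A \<inter> B \<subseteq> {\<one>}\<close>]
        q A(3) \<open>B \<subseteq> carrier G\<close> by blast
    then show ?thesis using prime_dvd_ord_p_core[OF fin p] B(3) ab q(1) by (auto simp: A_def)
  qed
  moreover have "A \<subseteq> A <#> B" "B \<subseteq> A <#> B"
    using A(3) \<open>B \<subseteq> carrier G\<close> subgroup.one_closed normal_imp_subgroup A(1) B(1)
    by (force simp: set_mult_def)+
  ultimately show ?case using B(4) unfolding A_def B_def by (simp, blast)
qed

lemma nilpotent_normal_subset_fitting: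
  assumes "K \<lhd> G" "lower_central_in G K c = {\<one>}"
  shows "K \<subseteq> fitting G"
proof -
  have "nilpotent_group (G\<lparr>carrier := K\<rparr>)"
    using nilpotent_group_subgroup_iff[OF normal_imp_subgroup[OF assms(1)]] assms(2) by blast
  then show ?thesis using assms(1) unfolding fitting_def by (blast intro: generate.incl)
qed

theorem S_set_subset_fitting:
  assumes fin: "finite (carrier G)"
  shows "S_set G \<subseteq> fitting G"
proof
  fix x assume x: "x \<in> S_set G"
  have "subgroup (fitting G) G"
    unfolding fitting_def using normal_imp_subgroup subgroup.subset
    by (intro generate_is_subgroup) blast
  moreover have "x [^] k \<in> fitting G"
    if "Factorial_Ring.prime p" "ord (x [^] (k::nat)) = p ^ j" for k p j
    using S_set_prime_power_order_mem_p_core[OF fin that(1) S_set_pow_closed[OF x] that(2)]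
      nilpotent_normal_subset_fitting[OF p_core_normal[OF fin that(1)] p_core_nilpotent[OF fin that(1)]]
    by blast
  ultimately show "x \<in> fitting G"
    using mem_subgroup_if_prime_power_order_pows_mem[OF fin] x by (simp add: S_set_def)
qed

lemma nilpotent_normal_subset_p_core_product:
  assumes fin: "finite (carrier G)" and K: "K \<lhd> G" "lower_central_in G K c = {\<one>}"
    and ps: "distinct ps" "\<forall>p\<in>set ps. Factorial_Ring.prime p"
    and primes: "\<And>p. Factorial_Ring.prime p \<Longrightarrow> p dvd order G \<Longrightarrow> p \<in> set ps"
  shows "K \<subseteq> p_core_product G ps"
proof
  fix y assume y: "y \<in> K"
  have W: "subgroup (p_core_product G ps) G" "\<And>p. p \<in> set ps \<Longrightarrow> p_core p \<subseteq> p_core_product G ps"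
    using p_core_product_props[OF fin ps] normal_imp_subgroup by blast+
  have Ks: "subgroup K G" using normal_imp_subgroup[OF K(1)] .
  have yG: "y \<in> carrier G" using subgroup.mem_carrier[OF Ks y] .
  have "y [^] k \<in> p_core_product G ps"
    if p: "Factorial_Ring.prime p" and o: "ord (y [^] (k::nat)) = p ^ j" for k p j
  proof (cases j)
    case 0
    then have "y [^] k = \<one>" using o ord_eq_1[of "y [^] k"] yG by simp
    then show ?thesis using subgroup.one_closed[OF W(1)] by simp
  next
    case (Suc j')
    have "y [^] k \<in> S_set G"
      using nilpotent_normal_subset_S_set[OF fin K] subgroup_nat_pow_closed[OF Ks y] by blast
    then have "y [^] k \<in> p_core p" using S_set_prime_power_order_mem_p_core[OF fin p _ o] by blast
    moreover have "p dvd order G"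
      using o Suc ord_dvd_group_order[of "y [^] k"] yG dvd_trans[of p "ord (y [^] k)"] by simp
    ultimately show ?thesis using W(2) primes p by blast
  qed
  then show "y \<in> p_core_product G ps"
    using mem_subgroup_if_prime_power_order_pows_mem[OF fin W(1) yG] by blast
qed

theorem fitting_subset_S_set:
  assumes fin: "finite (carrier G)"
  shows "fitting G \<subseteq> S_set G"
proof -
  define ps where "ps = filter Factorial_Ring.prime [0..<Suc (order G)]"
  have ps: "distinct ps" "\<forall>p\<in>set ps. Factorial_Ring.prime p" by (simp_all add: ps_def)
  have "p \<in> set ps" if "Factorial_Ring.prime p" "p dvd order G" for p
    using that fin dvd_imp_le[of p "order G"]
    unfolding ps_def set_filter set_upt by (simp add: order_gt_0_iff_finite)
  then have nilpotent_sub: "K \<subseteq> p_core_product G ps"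
    if "K \<lhd> G" "nilpotent_group (G\<lparr>carrier := K\<rparr>)" for K
    using nilpotent_normal_subset_p_core_product[OF fin _ _ ps] that
      nilpotent_group_subgroup_iff[OF normal_imp_subgroup] by metis
  have W: "p_core_product G ps \<lhd> G" "p_core_product G ps \<subseteq> S_set G"
    using p_core_product_props[OF fin ps] by blast+
  have "fitting G \<subseteq> p_core_product G ps"
    unfolding fitting_def
    by (rule generate_subgroup_incl[OF _ normal_imp_subgroup[OF W(1)]]) (use nilpotent_sub in blast)
  then show ?thesis using W(2) by blast
qed

theorem S_set_eq_fitting:
  assumes "finite (carrier G)"
  shows "S_set G = fitting G"
  using S_set_subset_fitting[OF assms] fitting_subset_S_set[OF assms] by blast

end

section \<open>Reduction to finite quotients\<close>

lemma finite_image_if_factors: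
  assumes "finite (f ` A)" and "\<And>x y. x \<in> A \<Longrightarrow> y \<in> A \<Longrightarrow> f x = f y \<Longrightarrow> g x = g y"
  shows "finite (g ` A)"
proof -
  have "g ` A \<subseteq> (\<lambda>v. g (inv_into A f v)) ` (f ` A)"
  proof
    fix w assume "w \<in> g ` A"
    then obtain x where x: "x \<in> A" "w = g x" by blast
    then have "g (inv_into A f (f x)) = g x"
      using assms(2) inv_into_into[of "f x" f A] f_inv_into_f[of "f x" f A] by blast
    moreover have "f x \<in> f ` A" using x(1) by blast
    ultimately show "w \<in> (\<lambda>v. g (inv_into A f v)) ` (f ` A)" using x(2) by (metis image_eqI)
  qed
  then show ?thesis using assms(1) finite_subset by blast
qed

context group begin

definition normal_core :: "'a set \<Rightarrow> 'a set" where
  "normal_core H = {y \<in> carrier G. \<forall>a\<in>carrier G. a \<otimes> y \<otimes> inv a \<in> H}"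

lemma normal_core_subset:
  assumes "subgroup H G"
  shows "normal_core H \<subseteq> H"
  by (auto simp: normal_core_def dest: bspec[where x = \<one>])

lemma normal_core_memD:
  assumes "y \<in> normal_core H"
  shows "y \<in> carrier G" "a \<in> carrier G \<Longrightarrow> a \<otimes> y \<otimes> inv a \<in> H"
  using assms by (simp_all add: normal_core_def)

lemma subgroup_normal_core:
  assumes H: "subgroup H G"
  shows "subgroup (normal_core H) G"
proof (rule subgroupI)
  show "normal_core H \<subseteq> carrier G" by (auto simp: normal_core_def)
  show "normal_core H \<noteq> {}"
    using subgroup.one_closed[OF H] by (auto simp: normal_core_def)
next
  fix y assume y: "y \<in> normal_core H"
  have "a \<otimes> inv y \<otimes> inv a \<in> H" if a: "a \<in> carrier G" for a
    using subgroup.m_inv_closed[OF H normal_core_memD(2)[OF y a]] a normal_core_memD(1)[OF y]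
    by (simp add: m_assoc inv_mult_group)
  then show "inv y \<in> normal_core H"
    using normal_core_memD(1)[OF y] by (simp add: normal_core_def)
next
  fix y z assume y: "y \<in> normal_core H" and z: "z \<in> normal_core H"
  have "a \<otimes> (y \<otimes> z) \<otimes> inv a \<in> H" if a: "a \<in> carrier G" for a
  proof -
    have "a \<otimes> (y \<otimes> z) \<otimes> inv a = (a \<otimes> y \<otimes> inv a) \<otimes> (a \<otimes> z \<otimes> inv a)"
      using a normal_core_memD(1)[OF y] normal_core_memD(1)[OF z] by (simp add: m_assoc)
    then show ?thesis
      using subgroup.m_closed[OF H normal_core_memD(2)[OF y a] normal_core_memD(2)[OF z a]] by simp
  qed
  then show "y \<otimes> z \<in> normal_core H"
    using normal_core_memD(1)[OF y] normal_core_memD(1)[OF z] by (simp add: normal_core_def)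
qed

lemma normal_core_normal:
  assumes H: "subgroup H G"
  shows "normal_core H \<lhd> G"
  using subgroup_normal_core[OF H]
proof (rule normal_invI)
  fix g y assume g: "g \<in> carrier G" and y: "y \<in> normal_core H"
  have "a \<otimes> (g \<otimes> y \<otimes> inv g) \<otimes> inv a \<in> H" if a: "a \<in> carrier G" for a
  proof -
    have "a \<otimes> (g \<otimes> y \<otimes> inv g) \<otimes> inv a = (a \<otimes> g) \<otimes> y \<otimes> inv (a \<otimes> g)"
      using a g normal_core_memD(1)[OF y] by (simp add: m_assoc inv_mult_group)
    then show ?thesis using normal_core_memD(2)[OF y] a g by simp
  qed
  then show "g \<otimes> y \<otimes> inv g \<in> normal_core H"
    using g normal_core_memD(1)[OF y] by (simp add: normal_core_def)
qed

lemma normal_core_mem_if_rcos_eq: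
  assumes H: "subgroup H G" and g: "g \<in> carrier G" "g' \<in> carrier G"
    and eq: "\<And>a. a \<in> carrier G \<Longrightarrow> H #> a #> g = H #> a #> g'"
  shows "g \<otimes> inv g' \<in> normal_core H"
proof -
  have "a \<otimes> (g \<otimes> inv g') \<otimes> inv a \<in> H" if a: "a \<in> carrier G" for a
  proof -
    have "H #> (a \<otimes> g) = H #> (a \<otimes> g')"
      using eq[OF a] coset_mult_assoc[OF subgroup.subset[OF H]] a g by simp
    then have "(a \<otimes> g) \<otimes> inv (a \<otimes> g') \<in> H" using rcos_eq_iff[OF H] a g by simp
    moreover have "(a \<otimes> g) \<otimes> inv (a \<otimes> g') = a \<otimes> (g \<otimes> inv g') \<otimes> inv a"
      using a g by (simp add: m_assoc inv_mult_group)
    ultimately show ?thesis by simp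
  qed
  then show ?thesis using g by (simp add: normal_core_def)
qed

text \<open>The core of \<open>H\<close> is the kernel of the action of \<open>G\<close> on the cosets of \<open>H\<close> by right
  multiplication, so its index is bounded by the number of maps between those cosets.\<close>

lemma finite_rcosets_normal_core:
  assumes H: "subgroup H G" and fin: "finite (rcosets H)"
  shows "finite (rcosets (normal_core H))"
proof -
  define N where "N = normal_core H"
  have Ns: "subgroup N G" using subgroup_normal_core[OF H] by (simp add: N_def)
  define \<psi> where "\<psi> = (\<lambda>g. \<lambda>C\<in>rcosets H. C #> g)"
  have "C #> g \<in> rcosets H" if C: "C \<in> rcosets H" and g: "g \<in> carrier G" for C g
  proof -
    obtain b where b: "b \<in> carrier G" "C = H #> b" using C unfolding RCOSETS_def by blast
    then have "C #> g = H #> (b \<otimes> g)" using g coset_mult_assoc[OF subgroup.subset[OF H]] by simp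
    then show ?thesis unfolding RCOSETS_def using b g by blast
  qed
  then have "\<psi> ` carrier G \<subseteq> rcosets H \<rightarrow>\<^sub>E rcosets H" by (auto simp: \<psi>_def)
  then have "finite (\<psi> ` carrier G)"
    using fin finite_subset by (metis finite_PiE)
  moreover have "N #> g = N #> g'"
    if g: "g \<in> carrier G" "g' \<in> carrier G" and eq: "\<psi> g = \<psi> g'" for g g'
  proof -
    have "H #> a #> g = H #> a #> g'" if a: "a \<in> carrier G" for a
    proof -
      have "H #> a \<in> rcosets H" unfolding RCOSETS_def using a by blast
      then show ?thesis using fun_cong[OF eq, of "H #> a"] unfolding \<psi>_def by simp
    qed
    then have "g \<otimes> inv g' \<in> N"
      using normal_core_mem_if_rcos_eq[OF H g] by (simp add: N_def)
    then show ?thesis using rcos_eq_iff[OF Ns g] by simp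
  qed
  ultimately have "finite ((\<lambda>g. N #> g) ` carrier G)"
    by (rule finite_image_if_factors)
  moreover have "rcosets N = (\<lambda>g. N #> g) ` carrier G" by (auto simp: RCOSETS_def)
  ultimately show ?thesis by (simp add: N_def)
qed

end

context normal begin

lemma quotient_image_subgroup:
  assumes K: "subgroup K G" and HK: "H \<subseteq> K"
  shows "subgroup ((\<lambda>k. H #> k) ` K) (G Mod H)"
proof -
  interpret Q: group "G Mod H" using factorgroup_is_group .
  have KG: "\<And>k. k \<in> K \<Longrightarrow> k \<in> carrier G" using subgroup.mem_carrier[OF K] .
  show ?thesis
  proof (rule Q.subgroupI)
    show "(\<lambda>k. H #> k) ` K \<subseteq> carrier (G Mod H)"
      using KG by (auto simp: FactGroup_def RCOSETS_def)
    show "(\<lambda>k. H #> k) ` K \<noteq> {}" using subgroup.one_closed[OF K] by blast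
  next
    fix A assume "A \<in> (\<lambda>k. H #> k) ` K"
    then obtain k where k: "k \<in> K" "A = H #> k" by blast
    then have "A \<in> carrier (G Mod H)" using KG by (auto simp: FactGroup_def RCOSETS_def)
    then have "inv\<^bsub>G Mod H\<^esub> A = H #> inv k" using inv_FactGroup rcos_inv KG k by simp
    then show "inv\<^bsub>G Mod H\<^esub> A \<in> (\<lambda>k. H #> k) ` K" using subgroup.m_inv_closed[OF K k(1)] by simp
  next
    fix A B assume "A \<in> (\<lambda>k. H #> k) ` K" "B \<in> (\<lambda>k. H #> k) ` K"
    then obtain a b where "a \<in> K" "A = H #> a" "b \<in> K" "B = H #> b" by blast
    then show "A \<otimes>\<^bsub>G Mod H\<^esub> B \<in> (\<lambda>k. H #> k) ` K"
      using rcos_sum KG subgroup.m_closed[OF K] by auto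
  qed
qed

lemma rcos_mem_quotient_image_iff:
  assumes K: "subgroup K G" and HK: "H \<subseteq> K" and y: "y \<in> carrier G"
  shows "H #> y \<in> (\<lambda>k. H #> k) ` K \<longleftrightarrow> y \<in> K"
proof
  assume "H #> y \<in> (\<lambda>k. H #> k) ` K"
  then obtain k where k: "k \<in> K" "H #> y = H #> k" by blast
  then have "y \<otimes> inv k \<in> H" using rcos_eq_iff[OF is_subgroup y] subgroup.mem_carrier[OF K] by blast
  then have "(y \<otimes> inv k) \<otimes> k \<in> K" using HK subgroup.m_closed[OF K] k(1) by blast
  then show "y \<in> K" using y k(1) subgroup.mem_carrier[OF K] by (simp add: m_assoc)
qed blast

lemma image_rcos_rcos_eq:
  assumes K: "subgroup K G" and g: "g \<in> carrier G"
  shows "(\<lambda>c. H #> c) ` (K #> g) = ((\<lambda>k. H #> k) ` K) #>\<^bsub>G Mod H\<^esub> (H #> g)"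
proof -
  have KG: "K \<subseteq> carrier G" using subgroup.subset[OF K] .
  have "(\<lambda>c. H #> c) ` (K #> g) = (\<lambda>k. H #> (k \<otimes> g)) ` K"
    by (auto simp: r_coset_def)
  also have "\<dots> = (\<lambda>A. A <#> (H #> g)) ` ((\<lambda>k. H #> k) ` K)"
    unfolding image_image using rcos_sum g KG by (auto intro!: image_cong)
  also have "\<dots> = ((\<lambda>k. H #> k) ` K) #>\<^bsub>G Mod H\<^esub> (H #> g)"
    unfolding r_coset_def FactGroup_def by auto
  finally show ?thesis .
qed

lemma Union_image_rcos:
  assumes K: "subgroup K G" and HK: "H \<subseteq> K" and C: "C \<in> rcosets K"
  shows "\<Union> ((\<lambda>c. H #> c) ` C) = C"
proof
  obtain g where g: "g \<in> carrier G" "C = K #> g" using C unfolding RCOSETS_def by blast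
  show "\<Union> ((\<lambda>c. H #> c) ` C) \<subseteq> C"
  proof
    fix y assume "y \<in> \<Union> ((\<lambda>c. H #> c) ` C)"
    then obtain h k where hk: "h \<in> H" "k \<in> K" "y = h \<otimes> (k \<otimes> g)"
      using g(2) by (auto simp: r_coset_def)
    then have "y = (h \<otimes> k) \<otimes> g" using HK g(1) subgroup.mem_carrier[OF K] by (auto simp: m_assoc)
    moreover have "h \<otimes> k \<in> K" using HK hk subgroup.m_closed[OF K] by blast
    ultimately show "y \<in> C" using g(2) by (auto simp: r_coset_def)
  qed
  show "C \<subseteq> \<Union> ((\<lambda>c. H #> c) ` C)"
    using rcos_self[OF _ is_subgroup] g r_coset_subset_G[OF subgroup.subset[OF K]] by blast
qed

lemma bij_betw_rcosets_quotient:
  assumes K: "subgroup K G" and HK: "H \<subseteq> K"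
  shows "bij_betw (\<lambda>C. (\<lambda>c. H #> c) ` C) (rcosets K) (rcosets\<^bsub>G Mod H\<^esub> ((\<lambda>k. H #> k) ` K))"
proof -
  have "inj_on (\<lambda>C. (\<lambda>c. H #> c) ` C) (rcosets K)"
    by (rule inj_onI) (metis Union_image_rcos[OF K HK])
  moreover have "(\<lambda>C. (\<lambda>c. H #> c) ` C) ` (rcosets K) = rcosets\<^bsub>G Mod H\<^esub> ((\<lambda>k. H #> k) ` K)"
  proof -
    have "rcosets K = (\<lambda>g. K #> g) ` carrier G" by (auto simp: RCOSETS_def)
    moreover have "carrier (G Mod H) = (\<lambda>g. H #> g) ` carrier G"
      by (auto simp: FactGroup_def RCOSETS_def)
    ultimately show ?thesis
      using image_rcos_rcos_eq[OF K] by (auto simp: RCOSETS_def image_image)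
  qed
  ultimately show ?thesis by (simp add: bij_betw_def)
qed

lemma S_set_quotient:
  assumes x: "x \<in> S_set G"
  shows "H #> x \<in> S_set (G Mod H)"
proof -
  interpret Q: group "G Mod H" using factorgroup_is_group .
  have xG: "x \<in> carrier G" using x by (simp add: S_set_def)
  have "(H #> x) [^]\<^bsub>G Mod H\<^esub> card (rcosets\<^bsub>G Mod H\<^esub> A) \<in> A"
    if A: "subgroup A (G Mod H)" "finite (rcosets\<^bsub>G Mod H\<^esub> A)" for A
  proof -
    define K where "K = \<Union> A"
    have K: "subgroup K G" using factgroup_subgroup_union_subgroup A(1) by (simp add: K_def)
    have "\<one>\<^bsub>G Mod H\<^esub> \<in> A" using subgroup.one_closed A(1) by blast
    then have HK: "H \<subseteq> K" by (auto simp: K_def)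
    have "A = rcosets\<^bsub>G\<lparr>carrier := K\<rparr>\<^esub> H"
      using factgroup_subgroup_union_factor A(1) by (simp add: K_def)
    then have AK: "A = (\<lambda>k. H #> k) ` K" by (auto simp: RCOSETS_def)
    have bij: "bij_betw (\<lambda>C. (\<lambda>c. H #> c) ` C) (rcosets K) (rcosets\<^bsub>G Mod H\<^esub> A)"
      using bij_betw_rcosets_quotient[OF K HK] AK by simp
    then have "finite (rcosets K)" using bij_betw_finite A(2) by blast
    then have "x [^] card (rcosets K) \<in> K" using x K by (simp add: S_set_def)
    then show ?thesis
      using FactGroup_pow[OF xG] bij_betw_same_card[OF bij] AK by simp
  qed
  moreover have "H #> x \<in> carrier (G Mod H)" using xG by (auto simp: FactGroup_def RCOSETS_def)
  ultimately show ?thesis by (simp add: S_set_def)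
qed

end

context group begin

lemma mem_S_set_if_quotients:
  assumes x: "x \<in> carrier G"
    and quot: "\<And>N. N \<lhd> G \<Longrightarrow> finite (rcosets N) \<Longrightarrow> N #> x \<in> S_set (G Mod N)"
  shows "x \<in> S_set G"
proof -
  have "x [^] card (rcosets H) \<in> H" if H: "subgroup H G" "finite (rcosets H)" for H
  proof -
    define N where "N = normal_core H"
    have N: "N \<lhd> G" "N \<subseteq> H" "finite (rcosets N)"
      using normal_core_normal[OF H(1)] normal_core_subset[OF H(1)] finite_rcosets_normal_core[OF H]
      by (simp_all add: N_def)
    interpret N: normal N G using N(1) .
    have bij: "bij_betw (\<lambda>C. (\<lambda>c. N #> c) ` C) (rcosets H) (rcosets\<^bsub>G Mod N\<^esub> ((\<lambda>h. N #> h) ` H))"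
      using N.bij_betw_rcosets_quotient[OF H(1) N(2)] .
    have "(N #> x) [^]\<^bsub>G Mod N\<^esub> card (rcosets\<^bsub>G Mod N\<^esub> ((\<lambda>h. N #> h) ` H)) \<in> (\<lambda>h. N #> h) ` H"
      using quot[OF N(1,3)] N.quotient_image_subgroup[OF H(1) N(2)] bij_betw_finite[OF bij] H(2)
      by (simp add: S_set_def)
    then have "N #> (x [^] card (rcosets H)) \<in> (\<lambda>h. N #> h) ` H"
      using N.FactGroup_pow[OF x] bij_betw_same_card[OF bij] by simp
    then show ?thesis using N.rcos_mem_quotient_image_iff[OF H(1) N(2)] x by simp
  qed
  then show ?thesis using x by (simp add: S_set_def)
qed

lemma S_set_quotient_eq_fitting:
  assumes "N \<lhd> G" "finite (rcosets N)"
  shows "S_set (G Mod N) = fitting (G Mod N)"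
proof -
  interpret N: normal N G using assms(1) .
  interpret Q: group "G Mod N" using N.factorgroup_is_group .
  show ?thesis using Q.S_set_eq_fitting assms(2) by (simp add: FactGroup_def)
qed

lemma S_set_eq_Inter_fitting_rel:
  "S_set G = \<Inter>{fitting_rel G N | N. N \<lhd> G \<and> finite (rcosets N)}"
proof
  show "S_set G \<subseteq> \<Inter>{fitting_rel G N | N. N \<lhd> G \<and> finite (rcosets N)}"
    using normal.S_set_quotient S_set_quotient_eq_fitting
    by (fastforce simp: fitting_rel_def S_set_def)
next
  show "\<Inter>{fitting_rel G N | N. N \<lhd> G \<and> finite (rcosets N)} \<subseteq> S_set G"
  proof
    fix x assume x: "x \<in> \<Inter>{fitting_rel G N | N. N \<lhd> G \<and> finite (rcosets N)}"
    have "rcosets (carrier G) = {carrier G}"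
      using subgroup.rcos_const[OF subgroup_self is_group] by (auto simp: RCOSETS_def)
    then have "fitting_rel G (carrier G) \<in> {fitting_rel G N | N. N \<lhd> G \<and> finite (rcosets N)}"
      using normal_self by auto
    then have "x \<in> carrier G" using x by (auto simp: fitting_rel_def)
    moreover have "N #> x \<in> S_set (G Mod N)" if "N \<lhd> G" "finite (rcosets N)" for N
      using x that S_set_quotient_eq_fitting by (auto simp: fitting_rel_def)
    ultimately show "x \<in> S_set G" by (rule mem_S_set_if_quotients)
  qed
qed

end

theorem theorem1p5:
  assumes "group G"
  shows "S_set G = \<Inter>{fitting_rel G N | N. normal N G \<and> finite (rcosets\<^bsub>G\<^esub> N)}"
  using group.S_set_eq_Inter_fitting_rel[OF assms] .

end
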